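(* For every integer $k\ge 1$ and every $t\in\left(0,\tfrac{1}{\sqrt{2}}\right]$, $$\frac{|Q_{k}(t^{2})|}{t}\leq 4k^{2}t+4\sum_{j=1}^{k-1}(k-j)\min\{1,(2j-1)t\}.$$
   Context: $T_k$ denotes the Chebyshev polynomial of the first kind: $T_0(t)=1$, $T_1(t)=t$, $T_{k+1}(t)=2tT_k(t)-T_{k-1}(t)$. For each integer $k\ge 0$, $P_k$ and $Q_k$ are the unique polynomials such that $T_{2k}(t)=(-1)^k+P_k(t^2)$ and $T_{2k+1}(t)=(-1)^k(2k+1)t+t\,Q_k(t^2)$ for all real $t$ (so $P_k(0)=Q_k(0)=0$). *)

theory Defs
  imports "HOL-Analysis.Analysis" "HOL-Computational_Algebra.Polynomial"
begin

fun cheb_T :: "nat \<Rightarrow> real poly" where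
  "cheb_T 0 = 1"
| "cheb_T (Suc 0) = [:0, 1:]"
| "cheb_T (Suc (Suc n)) = smult 2 [:0, 1:] * cheb_T (Suc n) - cheb_T n"

definition cheb_P :: "nat \<Rightarrow> real poly" where
  "cheb_P k = (THE p. \<forall>t::real. poly (cheb_T (2*k)) t = (-1)^k + poly p (t^2))"

definition cheb_Q :: "nat \<Rightarrow> real poly" where
  "cheb_Q k = (THE q. \<forall>t::real. poly (cheb_T (2*k+1)) t
                 = (-1)^k * (2*real k+1) * t + t * poly q (t^2))"

end

theory Submission
  imports Defs
begin

text \<open>
  Substitute \<open>t = sin x\<close>. As \<open>T_{2k+1}(sin x) = (-1)^k sin((2k+1)x)\<close>, the value
  \<open>t Q_k(t^2)\<close> is, up to sign, the defect
  \<open>sin((2k+1)x) - (2k+1) sin x = -4 sin x \<Sum>_{j=1..k} sin(jx)^2\<close>, and by telescoping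
  \<open>sin(jx)^2 = sin x \<Sum>_{i=1..j} sin((2i-1)x)\<close>. So \<open>|Q_k(t^2)|/t\<close> is four times the
  double sum \<open>\<Sum>_{j=1..k} \<Sum>_{i=1..j} sin((2i-1)x) = \<Sum>_{i=1..k} (k-i+1) sin((2i-1)x)\<close>.
  Every term is at most \<open>min 1 ((2i-1)t)\<close>; for one copy of each term the bound \<open>(2i-1)t\<close>
  is used, and these add up to \<open>k^2 t\<close>.
\<close>

lemma poly_cheb_T_cos: "poly (cheb_T n) (cos x) = cos (real n * x)"
proof (induction n rule: cheb_T.induct)
  case (3 n)
  have "cos (real (Suc (Suc n)) * x) = 2 * cos x * cos (real (Suc n) * x) - cos (real n * x)"
    using cos_add[of "real (Suc n) * x" x] cos_diff[of "real (Suc n) * x" x]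
    by (simp add: algebra_simps)
  then show ?case using 3 by simp
qed simp_all

lemma poly_cheb_T_odd_sin:
  "poly (cheb_T (2*k+1)) (sin x) = (-1)^k * sin ((2*real k+1) * x)"
proof -
  have "poly (cheb_T (2*k+1)) (sin x) = cos (real (2*k+1) * (pi/2 - x))"
    using poly_cheb_T_cos[of "2*k+1" "pi/2 - x"] by (simp add: sin_cos_eq)
  also have "real (2*k+1) * (pi/2 - x) = real k * pi + (pi/2 - (2*real k+1) * x)"
    by (simp add: algebra_simps)
  also have "cos (real k * pi + (pi/2 - (2*real k+1) * x)) = (-1)^k * sin ((2*real k+1) * x)"
    by (simp add: cos_add cos_diff)
  finally show ?thesis .
qed

lemma cheb_T_even_odd_parts:
  "\<exists>e d. \<forall>t::real. poly (cheb_T (2*n)) t = poly e (t^2) \<and> poly (cheb_T (2*n+1)) t = t * poly d (t^2)"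
proof (induction n)
  case 0
  show ?case by (rule exI[of _ 1], rule exI[of _ 1]) simp
next
  case (Suc n)
  then obtain e d where ed: "\<And>t::real. poly (cheb_T (2*n)) t = poly e (t^2)"
    "\<And>t::real. poly (cheb_T (2*n+1)) t = t * poly d (t^2)" by blast
  define e' where "e' = smult 2 [:0,1:] * d - e"
  have a: "2 * Suc n = Suc (Suc (2*n))" and b: "2 * Suc n + 1 = Suc (Suc (2*n+1))" by simp_all
  have e': "poly (cheb_T (2 * Suc n)) t = poly e' (t^2)" for t :: real
    unfolding a e'_def using ed by (simp add: power2_eq_square algebra_simps)
  have d': "poly (cheb_T (2 * Suc n + 1)) t = t * poly (smult 2 e' - d) (t^2)" for t :: real
  proof -
    have "poly (cheb_T (2 * Suc n + 1)) t = 2 * t * poly (cheb_T (2 * Suc n)) t - poly (cheb_T (2*n+1)) t"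
      unfolding b by (simp add: a)
    also have "\<dots> = t * poly (smult 2 e' - d) (t^2)"
      by (simp only: e' ed) (simp add: algebra_simps)
    finally show ?thesis .
  qed
  show ?case
    by (intro exI allI conjI) (rule e', rule d')
qed

lemma poly_eq_if_odd_parts_eq:
  fixes p q :: "real poly"
  assumes "\<And>t. t * poly p (t^2) = t * poly q (t^2)"
  shows "p = q"
proof -
  have "{0<..} \<subseteq> {x. poly (p - q) x = 0}"
  proof
    fix x :: real assume "x \<in> {0<..}"
    then have "sqrt x \<noteq> 0" "(sqrt x)^2 = x" by auto
    then show "x \<in> {x. poly (p - q) x = 0}"
      using assms[of "sqrt x"] by auto
  qed
  moreover have "infinite {0::real<..}"
    by (rule infinite_Ioi)
  ultimately have "infinite {x. poly (p - q) x = 0}"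
    by (metis finite_subset)
  then have "p - q = 0"
    using poly_roots_finite by blast
  then show ?thesis by simp
qed

lemma poly_cheb_Q:
  "poly (cheb_T (2*k+1)) t = (-1)^k * (2*real k+1) * t + t * poly (cheb_Q k) (t^2)"
proof -
  define c :: real where "c = (-1)^k * (2*real k+1)"
  obtain d where d: "\<And>t::real. poly (cheb_T (2*k+1)) t = t * poly d (t^2)"
    using cheb_T_even_odd_parts by blast
  have odd_part: "\<forall>t. poly (cheb_T (2*k+1)) t = c * t + t * poly (d - [:c:]) (t^2)"
    using d by (simp add: algebra_simps)
  have Q: "cheb_Q k = d - [:c:]"
    unfolding cheb_Q_def c_def[symmetric]
  proof (rule the_equality)
    fix q assume q: "\<forall>t. poly (cheb_T (2*k+1)) t = c * t + t * poly q (t^2)"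
    show "q = d - [:c:]"
    proof (rule poly_eq_if_odd_parts_eq)
      fix t :: real
      show "t * poly q (t^2) = t * poly (d - [:c:]) (t^2)"
        using q[rule_format, of t] d[of t] by (simp add: algebra_simps)
    qed
  qed (rule odd_part)
  show ?thesis
    using odd_part[rule_format, of t] unfolding Q c_def .
qed

lemma sin_odd_multiple_defect:
  "sin ((2 * real k + 1) * x) - (2 * real k + 1) * sin x = - 4 * sin x * (\<Sum>j=1..k. (sin (real j * x))^2)"
proof (induction k)
  case (Suc k)
  define y where "y = real (Suc k) * x"
  have "sin ((2*real (Suc k)+1)*x) - sin ((2*real k+1)*x) = sin (2*y + x) - sin (2*y - x)"
    unfolding y_def by (simp add: algebra_simps)
  also have "\<dots> = 2 * cos (2*y) * sin x"
    by (simp add: sin_add sin_diff)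
  also have "\<dots> = 2 * sin x - 4 * sin x * (sin y)^2"
    unfolding cos_double_sin by (simp add: algebra_simps)
  finally show ?case
    using Suc by (simp add: y_def algebra_simps)
qed simp

lemma sum_sin_odd_multiples:
  "(\<Sum>i=1..m. sin ((2 * real i - 1) * x)) * sin x = (sin (real m * x))^2"
proof (induction m)
  case (Suc m)
  define a where "a = sin (real m * x)"
  define b where "b = cos (real m * x)"
  have 1: "sin (real (Suc m) * x) = a * cos x + b * sin x"
    unfolding a_def b_def by (simp add: algebra_simps sin_add)
  have "(2*real (Suc m) - 1)*x = 2 * (real m * x) + x" by (simp add: algebra_simps)
  then have 2: "sin ((2*real (Suc m) - 1)*x) = 2*a*b*cos x + (b^2 - a^2) * sin x"
    unfolding a_def b_def by (simp add: sin_add sin_double cos_double)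
  have "a^2 + b^2 = 1" "(sin x)^2 + (cos x)^2 = 1"
    unfolding a_def b_def by simp_all
  then have "sin ((2*real (Suc m) - 1)*x) * sin x = (sin (real (Suc m) * x))^2 - a^2"
    unfolding 1 2 by algebra
  then show ?case using Suc by (simp add: a_def distrib_right)
qed simp

lemma abs_poly_cheb_Q_sin:
  assumes "sin x > 0"
  shows "\<bar>poly (cheb_Q k) ((sin x)^2)\<bar> / sin x
           = 4 * (\<Sum>j=1..k. \<Sum>i=1..j. sin ((2 * real i - 1) * x))"
proof -
  define S where "S = (\<Sum>j=1..k. (sin (real j * x))^2)"
  have "sin x * poly (cheb_Q k) ((sin x)^2) = poly (cheb_T (2*k+1)) (sin x) - (-1)^k * (2*real k+1) * sin x"
    using poly_cheb_Q[of k "sin x"] by simp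
  also have "\<dots> = (-1)^k * (sin ((2*real k+1) * x) - (2*real k+1) * sin x)"
    unfolding poly_cheb_T_odd_sin by (simp add: algebra_simps)
  also have "\<dots> = sin x * ((-1)^k * (-4 * S))"
    by (simp add: sin_odd_multiple_defect S_def)
  finally have "poly (cheb_Q k) ((sin x)^2) = (-1)^k * (-4 * S)"
    using assms by (metis mult_cancel_left less_irrefl)
  moreover have "S \<ge> 0"
    unfolding S_def by (simp add: sum_nonneg)
  ultimately have "\<bar>poly (cheb_Q k) ((sin x)^2)\<bar> / sin x = 4 * S / sin x"
    by (simp add: abs_mult)
  also have "S = sin x * (\<Sum>j=1..k. \<Sum>i=1..j. sin ((2 * real i - 1) * x))"
  proof -
    have "(sin (real j * x))^2 = sin x * (\<Sum>i=1..j. sin ((2 * real i - 1) * x))" for j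
      using sum_sin_odd_multiples[where m=j and x=x] by (simp add: mult.commute)
    then show ?thesis
      unfolding S_def sum_distrib_left by simp
  qed
  finally show ?thesis
    using assms by simp
qed

lemma abs_sin_nat_mult_le: "\<bar>sin (real n * x)\<bar> \<le> real n * \<bar>sin x\<bar>"
proof (induction n)
  case (Suc n)
  have "\<bar>sin (real (Suc n) * x)\<bar> = \<bar>sin (real n * x) * cos x + cos (real n * x) * sin x\<bar>"
    by (simp add: algebra_simps sin_add)
  also have "\<dots> \<le> \<bar>sin (real n * x)\<bar> * \<bar>cos x\<bar> + \<bar>cos (real n * x)\<bar> * \<bar>sin x\<bar>"
    by (metis abs_mult abs_triangle_ineq)
  also have "\<dots> \<le> \<bar>sin (real n * x)\<bar> * 1 + 1 * \<bar>sin x\<bar>"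
    by (intro add_mono mult_mono) auto
  finally show ?case using Suc by (simp add: algebra_simps)
qed simp

lemma sin_odd_multiple_le:
  assumes "i \<ge> 1" "sin x \<ge> 0"
  shows "sin ((2 * real i - 1) * x) \<le> min 1 ((2 * real i - 1) * sin x)"
proof -
  have "2 * real i - 1 = real (2*i - 1)"
    using assms(1) by simp
  then have "sin ((2 * real i - 1) * x) \<le> (2 * real i - 1) * sin x"
    using abs_sin_nat_mult_le[of "2*i - 1" x] assms(2) by (metis abs_le_D1 abs_of_nonneg)
  then show ?thesis
    by simp
qed

lemma double_sum_le:
  fixes m :: "nat \<Rightarrow> real"
  assumes "\<And>i. i \<ge> 1 \<Longrightarrow> m i \<le> (2*real i - 1) * t"
  shows "(\<Sum>j=1..k. \<Sum>i=1..j. m i) \<le> (real k)^2 * t + (\<Sum>j=1..k-1. real (k - j) * m j)"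
proof (induction k)
  case (Suc k)
  have "(\<Sum>j=1..Suc k-1. real (Suc k - j) * m j) = (\<Sum>j=1..k. real (k - j) * m j + m j)"
    by (intro sum.cong) (auto simp: Suc_diff_le algebra_simps)
  also have "(\<Sum>j=1..k. real (k - j) * m j) = (\<Sum>j=1..k-1. real (k - j) * m j)"
    by (cases k) simp_all
  moreover have "m (Suc k) \<le> (2 * real k + 1) * t"
    using assms[of "Suc k"] by (simp add: algebra_simps)
  moreover have "(real (Suc k))^2 * t = (real k)^2 * t + (2 * real k + 1) * t"
    by (simp add: algebra_simps power2_eq_square)
  ultimately show ?case using Suc by (simp add: sum.distrib)
qed simp

theorem mainTheorem3:
  fixes k :: nat and t :: real
  assumes "k \<ge> 1" and "0 < t" and "t \<le> 1 / sqrt 2"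
  shows "\<bar>poly (cheb_Q k) (t^2)\<bar> / t
           \<le> 4 * (real k)^2 * t + 4 * (\<Sum>j=1..k-1. real (k - j) * min 1 ((2 * real j - 1) * t))"
proof -
  have "1 / sqrt 2 \<le> (1::real)" by (simp add: divide_le_eq)
  with assms(3) have "t \<le> 1" by linarith
  with assms(2) have sin_x: "sin (arcsin t) = t" by simp
  have "\<bar>poly (cheb_Q k) (t^2)\<bar> / t
          = 4 * (\<Sum>j=1..k. \<Sum>i=1..j. sin ((2 * real i - 1) * arcsin t))"
    using abs_poly_cheb_Q_sin[of "arcsin t" k] assms(2) by (simp add: sin_x)
  also have "\<dots> \<le> 4 * ((real k)^2 * t + (\<Sum>j=1..k-1. real (k - j) * min 1 ((2 * real j - 1) * t)))"
  proof -
    have "(\<Sum>j=1..k. \<Sum>i=1..j. sin ((2 * real i - 1) * arcsin t))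
            \<le> (\<Sum>j=1..k. \<Sum>i=1..j. min 1 ((2 * real i - 1) * t))"
      using sin_odd_multiple_le[of _ "arcsin t"] assms(2) by (intro sum_mono) (simp add: sin_x)
    also have "\<dots> \<le> (real k)^2 * t + (\<Sum>j=1..k-1. real (k - j) * min 1 ((2 * real j - 1) * t))"
      by (rule double_sum_le) simp
    finally show ?thesis by simp
  qed
  finally show ?thesis by (simp add: algebra_simps)
qed

end
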